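(* Let $G$ be a bipartite graph with ordered colour classes $A,B$ whose edge set is partitioned into $k$ monotone matchings $E_1,\dots,E_k$. Let $G'$ be the unraveling of $G$ with respect to this partition. Then $G'$ is $3$-monotone.
   Context: For a bipartite graph with ordered colour classes $(v_1,\dots,v_n)$ and $(w_1,\dots,w_m)$, edges $v_iw_j$ and $v_kw_\ell$ cross if $i<k$ and $\ell<j$; a matching is monotone if no two of its edges cross; a bipartite graph is $d$-monotone if, for some ordering of its colour classes, its edge set is the union of $d$ monotone matchings. Given a graph $G$ with a partition $E_1,\dots,E_k$ of $E(G)$, the unraveling $G'$ has vertex set $V(G)\times[1,k]=\{v_i: v\in V(G), i\in[1,k]\}$, with an edge $v_iw_i$ for each edge $vw\in E_i$ and each $i\in[1,k]$, and an edge $v_iv_{i+1}$ for each $v\in V(G)$ and $i\in[1,k-1]$. *)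

theory Defs
  imports Main
begin

(* An ordered bipartite graph: colour classes X, Y (disjoint), each linearly
   ordered via an injective rank function into nat; edges are 2-sets {x,y}
   with x in X, y in Y. *)

definition crosses ::
  "'v set \<Rightarrow> 'v set \<Rightarrow> ('v \<Rightarrow> nat) \<Rightarrow> ('v \<Rightarrow> nat) \<Rightarrow> 'v set \<Rightarrow> 'v set \<Rightarrow> bool" where
  "crosses X Y oX oY e f \<longleftrightarrow>
     (\<exists>x y x' y'. x \<in> X \<and> y \<in> Y \<and> x' \<in> X \<and> y' \<in> Y \<and>
        e = {x, y} \<and> f = {x', y'} \<and> oX x < oX x' \<and> oY y' < oY y)"

definition is_matching :: "'v set set \<Rightarrow> bool" where
  "is_matching M \<longleftrightarrow> (\<forall>e\<in>M. \<forall>f\<in>M. e \<noteq> f \<longrightarrow> e \<inter> f = {})"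

definition monotone_matching ::
  "'v set \<Rightarrow> 'v set \<Rightarrow> ('v \<Rightarrow> nat) \<Rightarrow> ('v \<Rightarrow> nat) \<Rightarrow> 'v set set \<Rightarrow> bool" where
  "monotone_matching X Y oX oY M \<longleftrightarrow>
     is_matching M \<and> (\<forall>e\<in>M. \<forall>f\<in>M. \<not> crosses X Y oX oY e f)"

definition d_monotone :: "'v set \<Rightarrow> 'v set set \<Rightarrow> nat \<Rightarrow> bool" where
  "d_monotone V E d \<longleftrightarrow>
     (\<exists>X Y (oX :: 'v \<Rightarrow> nat) (oY :: 'v \<Rightarrow> nat) (Ms :: nat \<Rightarrow> 'v set set).
        X \<inter> Y = {} \<and> X \<union> Y = V \<and> inj_on oX X \<and> inj_on oY Y \<and>
        (\<forall>e\<in>E. \<exists>x\<in>X. \<exists>y\<in>Y. e = {x, y}) \<and>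
        E = (\<Union>i<d. Ms i) \<and>
        (\<forall>i<d. monotone_matching X Y oX oY (Ms i)))"

definition unravel_V :: "'v set \<Rightarrow> nat \<Rightarrow> ('v \<times> nat) set" where
  "unravel_V V k = V \<times> {1..k}"

definition unravel_E :: "'v set \<Rightarrow> (nat \<Rightarrow> 'v set set) \<Rightarrow> nat \<Rightarrow> ('v \<times> nat) set set" where
  "unravel_E V P k =
     {{(v, i), (w, i)} | v w i. i \<in> {1..k} \<and> {v, w} \<in> P i}
     \<union> {{(v, i), (v, Suc i)} | v i. v \<in> V \<and> 1 \<le> i \<and> i < k}"

end

theory Submission
  imports Defs
begin

text \<open>
  Put the copies of A in odd layers and of B in even layers into one colour class X of the
  unraveling, and all other vertices into Y. Order both classes lexicographically: first by layer,
  then by the given orders of A and B. The copies of the matchings \<open>E\<^sub>i\<close> then form a single monotone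
  matching, since edges in different layers cannot cross and within a layer the order is the
  original one (with the roles of A and B swapped in even layers). The vertical edges
  \<open>v\<^sub>i v\<^sub>i\<^sub>+\<^sub>1\<close> split into those with lower end in X and those with lower end in Y; moving a
  vertex one layer up shifts its rank by a constant, so two parallel vertical edges never cross.
\<close>

lemma crosses_swap: "crosses X Y oX oY e f \<longleftrightarrow> crosses Y X oY oX f e"
  unfolding crosses_def by (smt (verit) insert_commute)

lemma monotone_matching_swap:
  "monotone_matching X Y oX oY M \<longleftrightarrow> monotone_matching Y X oY oX M"
  unfolding monotone_matching_def using crosses_swap by blast

lemma crosses_doubleton_iff:
  assumes "X \<inter> Y = {}" "x \<in> X" "y \<in> Y" "x' \<in> X" "y' \<in> Y"
  shows "crosses X Y oX oY {x, y} {x', y'} \<longleftrightarrow> oX x < oX x' \<and> oY y' < oY y"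
  using assms unfolding crosses_def doubleton_eq_iff by blast

lemma monotone_matching_image:
  assumes M: "monotone_matching A B oA oB M"
    and M_edges: "\<forall>e\<in>M. \<exists>a\<in>A. \<exists>b\<in>B. e = {a, b}"
    and inj: "inj_on f (A \<union> B)" and "f ` A \<subseteq> X" "f ` B \<subseteq> Y" "X \<inter> Y = {}"
    and reflA: "\<And>a a'. a \<in> A \<Longrightarrow> a' \<in> A \<Longrightarrow> oX (f a) < oX (f a') \<Longrightarrow> oA a < oA a'"
    and reflB: "\<And>b b'. b \<in> B \<Longrightarrow> b' \<in> B \<Longrightarrow> oY (f b) < oY (f b') \<Longrightarrow> oB b < oB b'"
  shows "monotone_matching X Y oX oY ((`) f ` M)"
  unfolding monotone_matching_def is_matching_def
proof (intro conjI ballI impI)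
  fix e' g' assume "e' \<in> (`) f ` M" "g' \<in> (`) f ` M" "e' \<noteq> g'"
  then obtain e g where "e \<in> M" "g \<in> M" "e \<noteq> g" "e' = f ` e" "g' = f ` g" by blast
  moreover have "e \<subseteq> A \<union> B" "g \<subseteq> A \<union> B" using M_edges \<open>e \<in> M\<close> \<open>g \<in> M\<close> by auto
  moreover have "e \<inter> g = {}"
    using M \<open>e \<in> M\<close> \<open>g \<in> M\<close> \<open>e \<noteq> g\<close> unfolding monotone_matching_def is_matching_def by blast
  ultimately show "e' \<inter> g' = {}"
    using inj_on_image_Int[OF inj, of e g] by simp
next
  fix e' g' assume "e' \<in> (`) f ` M" "g' \<in> (`) f ` M"
  then obtain e g where "e \<in> M" "g \<in> M" "e' = f ` e" "g' = f ` g" by blast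
  then obtain a b a' b' where "a \<in> A" "b \<in> B" "e = {a, b}" "a' \<in> A" "b' \<in> B" "g = {a', b'}"
    using M_edges by meson
  then have ab: "a \<in> A" "b \<in> B" "{a, b} \<in> M" "e' = {f a, f b}"
    and ab': "a' \<in> A" "b' \<in> B" "{a', b'} \<in> M" "g' = {f a', f b'}"
    using \<open>e \<in> M\<close> \<open>g \<in> M\<close> \<open>e' = f ` e\<close> \<open>g' = f ` g\<close> by auto
  have "f a \<in> X" "f b \<in> Y" "f a' \<in> X" "f b' \<in> Y"
    using ab ab' assms(4,5) by auto
  note crosses_iff = crosses_doubleton_iff[OF \<open>X \<inter> Y = {}\<close> this]
  show "\<not> crosses X Y oX oY e' g'"
  proof
    assume "crosses X Y oX oY e' g'"
    then have "oX (f a) < oX (f a')" "oY (f b') < oY (f b)"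
      using crosses_iff ab(4) ab'(4) by simp_all
    then have "crosses A B oA oB {a, b} {a', b'}"
      unfolding crosses_def using ab ab' reflA reflB by blast
    then show False using M ab(3) ab'(3) unfolding monotone_matching_def by blast
  qed
qed

lemma monotone_matching_UN_layers:
  fixes lvl :: "'a \<Rightarrow> 'l::linorder"
  assumes mono: "\<And>i. i \<in> I \<Longrightarrow> monotone_matching X Y oX oY (Ms i)"
    and in_layer: "\<And>i e p. i \<in> I \<Longrightarrow> e \<in> Ms i \<Longrightarrow> p \<in> e \<Longrightarrow> lvl p = i"
    and X_layered: "\<And>p q. p \<in> X \<Longrightarrow> q \<in> X \<Longrightarrow> lvl p < lvl q \<Longrightarrow> oX p < oX q"
    and Y_layered: "\<And>p q. p \<in> Y \<Longrightarrow> q \<in> Y \<Longrightarrow> lvl p < lvl q \<Longrightarrow> oY p < oY q"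
  shows "monotone_matching X Y oX oY (\<Union>i\<in>I. Ms i)"
  unfolding monotone_matching_def is_matching_def
proof (intro conjI ballI impI)
  fix e g assume "e \<in> (\<Union>i\<in>I. Ms i)" "g \<in> (\<Union>i\<in>I. Ms i)" "e \<noteq> g"
  then obtain i j where ij: "i \<in> I" "j \<in> I" "e \<in> Ms i" "g \<in> Ms j" by blast
  show "e \<inter> g = {}"
  proof (cases "i = j")
    case True
    then show ?thesis
      using mono ij \<open>e \<noteq> g\<close> unfolding monotone_matching_def is_matching_def by blast
  next
    case False
    then show ?thesis using in_layer ij by blast
  qed
next
  fix e g assume "e \<in> (\<Union>i\<in>I. Ms i)" "g \<in> (\<Union>i\<in>I. Ms i)"
  then obtain i j where ij: "i \<in> I" "j \<in> I" "e \<in> Ms i" "g \<in> Ms j" by blast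
  show "\<not> crosses X Y oX oY e g"
  proof
    assume cr: "crosses X Y oX oY e g"
    then obtain x y x' y' where "x \<in> X" "y \<in> Y" "x' \<in> X" "y' \<in> Y" "e = {x, y}" "g = {x', y'}"
      "oX x < oX x'" "oY y' < oY y"
      unfolding crosses_def by blast
    then have "i = j"
      using in_layer[of i e] in_layer[of j g] ij X_layered[of x' x] Y_layered[of y y']
      by (metis insertI1 insert_commute less_asym neqE)
    then show False using cr ij mono unfolding monotone_matching_def by blast
  qed
qed

lemma monotone_matching_graph:
  assumes "X \<inter> Y = {}" "S \<subseteq> X" "s ` S \<subseteq> Y" "inj_on s S"
    and s_mono: "\<And>p q. p \<in> S \<Longrightarrow> q \<in> S \<Longrightarrow> oX p < oX q \<Longrightarrow> oY (s p) < oY (s q)"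
  shows "monotone_matching X Y oX oY ((\<lambda>p. {p, s p}) ` S)"
  unfolding monotone_matching_def is_matching_def
proof (intro conjI ballI impI)
  fix e g assume "e \<in> (\<lambda>p. {p, s p}) ` S" "g \<in> (\<lambda>p. {p, s p}) ` S" "e \<noteq> g"
  then obtain p q where pq: "p \<in> S" "q \<in> S" "e = {p, s p}" "g = {q, s q}" "p \<noteq> q" by blast
  then have "p \<in> X" "q \<in> X" "s p \<in> Y" "s q \<in> Y" "s p \<noteq> s q"
    using assms(2-4) by (auto dest: inj_onD)
  then show "e \<inter> g = {}"
    using pq \<open>X \<inter> Y = {}\<close> by auto
next
  fix e g assume "e \<in> (\<lambda>p. {p, s p}) ` S" "g \<in> (\<lambda>p. {p, s p}) ` S"
  then obtain p q where pq: "p \<in> S" "q \<in> S" "e = {p, s p}" "g = {q, s q}" by blast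
  then have "p \<in> X" "s p \<in> Y" "q \<in> X" "s q \<in> Y"
    using assms(2,3) by auto
  note crosses_iff = crosses_doubleton_iff[OF \<open>X \<inter> Y = {}\<close> this]
  show "\<not> crosses X Y oX oY e g"
  proof
    assume "crosses X Y oX oY e g"
    then have "oX p < oX q" "oY (s q) < oY (s p)"
      using crosses_iff pq by simp_all
    then show False
      using s_mono[OF pq(1,2)] by (meson less_asym)
  qed
qed

lemma d_monotone_3I:
  assumes "X \<inter> Y = {}" "X \<union> Y = V" "inj_on oX X" "inj_on oY Y"
    and "\<forall>e\<in>E. \<exists>x\<in>X. \<exists>y\<in>Y. e = {x, y}" and "E = M\<^sub>0 \<union> M\<^sub>1 \<union> M\<^sub>2"
    and "monotone_matching X Y oX oY M\<^sub>0" "monotone_matching X Y oX oY M\<^sub>1"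
      "monotone_matching X Y oX oY M\<^sub>2"
  shows "d_monotone V E 3"
proof -
  have "(\<Union>i<3. [M\<^sub>0, M\<^sub>1, M\<^sub>2] ! i) = M\<^sub>0 \<union> M\<^sub>1 \<union> M\<^sub>2"
    by (auto simp: numeral_3_eq_3 lessThan_Suc)
  moreover have "\<forall>i<3. monotone_matching X Y oX oY ([M\<^sub>0, M\<^sub>1, M\<^sub>2] ! i)"
    using assms(7-9) by (auto simp: numeral_3_eq_3 less_Suc_eq)
  ultimately show ?thesis
    unfolding d_monotone_def using assms(1-6) by blast
qed

definition unravel_X :: "'v set \<Rightarrow> 'v set \<Rightarrow> nat \<Rightarrow> ('v \<times> nat) set" where
  "unravel_X A B k = {(v, i). v \<in> A \<union> B \<and> i \<in> {1..k} \<and> (v \<in> A \<longleftrightarrow> odd i)}"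

definition unravel_Y :: "'v set \<Rightarrow> 'v set \<Rightarrow> nat \<Rightarrow> ('v \<times> nat) set" where
  "unravel_Y A B k = {(v, i). v \<in> A \<union> B \<and> i \<in> {1..k} \<and> (v \<in> A \<longleftrightarrow> even i)}"

definition unravel_rank :: "'v set \<Rightarrow> ('v \<Rightarrow> nat) \<Rightarrow> ('v \<Rightarrow> nat) \<Rightarrow> nat \<Rightarrow> 'v \<times> nat \<Rightarrow> nat" where
  "unravel_rank A oA oB M = (\<lambda>(v, i). i * M + (if v \<in> A then oA v else oB v))"

definition lift_layer :: "nat \<Rightarrow> 'v set set \<Rightarrow> ('v \<times> nat) set set" where
  "lift_layer i Q = (`) (\<lambda>v. (v, i)) ` Q"

definition rungs :: "('v \<times> nat) set \<Rightarrow> ('v \<times> nat) set set" where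
  "rungs S = (\<lambda>p. {p, apsnd Suc p}) ` S"

lemma unravel_X_Y_disjoint: "unravel_X A B k \<inter> unravel_Y A B k = {}"
  unfolding unravel_X_def unravel_Y_def by auto

lemma unravel_X_Un_Y: "unravel_X A B k \<union> unravel_Y A B k = unravel_V (A \<union> B) k"
  unfolding unravel_X_def unravel_Y_def unravel_V_def by auto

lemma Suc_layer_unravel_X:
  "(v, i) \<in> unravel_X A B k \<Longrightarrow> i < k \<Longrightarrow> (v, Suc i) \<in> unravel_Y A B k"
  unfolding unravel_X_def unravel_Y_def by auto

lemma Suc_layer_unravel_Y:
  "(v, i) \<in> unravel_Y A B k \<Longrightarrow> i < k \<Longrightarrow> (v, Suc i) \<in> unravel_X A B k"
  unfolding unravel_X_def unravel_Y_def by auto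

lemma unravel_E_eq:
  assumes "\<forall>i\<in>{1..k}. \<forall>e\<in>P i. \<exists>a\<in>A. \<exists>b\<in>B. e = {a, b}"
  shows "unravel_E (A \<union> B) P k =
     (\<Union>i\<in>{1..k}. lift_layer i (P i))
     \<union> rungs {p \<in> unravel_X A B k. snd p < k} \<union> rungs {p \<in> unravel_Y A B k. snd p < k}"
proof -
  have layers: "{{(v, i), (w, i)} | v w i. i \<in> {1..k} \<and> {v, w} \<in> P i} = (\<Union>i\<in>{1..k}. lift_layer i (P i))"
  proof (intro equalityI subsetI)
    fix e assume "e \<in> {{(v, i), (w, i)} | v w i. i \<in> {1..k} \<and> {v, w} \<in> P i}"
    then obtain v w i where "i \<in> {1..k}" "{v, w} \<in> P i" "e = (\<lambda>u. (u, i)) ` {v, w}"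
      by auto
    then show "e \<in> (\<Union>i\<in>{1..k}. lift_layer i (P i))"
      unfolding lift_layer_def by blast
  next
    fix e assume "e \<in> (\<Union>i\<in>{1..k}. lift_layer i (P i))"
    then obtain i d where "i \<in> {1..k}" "d \<in> P i" "e = (\<lambda>u. (u, i)) ` d"
      unfolding lift_layer_def by blast
    moreover obtain v w where "d = {v, w}" using assms \<open>i \<in> {1..k}\<close> \<open>d \<in> P i\<close> by blast
    ultimately show "e \<in> {{(v, i), (w, i)} | v w i. i \<in> {1..k} \<and> {v, w} \<in> P i}"
      by auto
  qed
  have lower_ends: "{p \<in> unravel_X A B k. snd p < k} \<union> {p \<in> unravel_Y A B k. snd p < k}
      = {(v, i). v \<in> A \<union> B \<and> 1 \<le> i \<and> i < k}"
    unfolding unravel_X_def unravel_Y_def by auto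
  have rung_set: "{{(v, i), (v, Suc i)} | v i. v \<in> A \<union> B \<and> 1 \<le> i \<and> i < k}
      = (\<lambda>p. {p, apsnd Suc p}) ` {(v, i). v \<in> A \<union> B \<and> 1 \<le> i \<and> i < k}"
    by fastforce
  show ?thesis
    unfolding unravel_E_def rungs_def Un_assoc image_Un[symmetric] lower_ends layers rung_set ..
qed

lemma lift_layer_edges:
  assumes "A \<inter> B = {}" "i \<in> {1..k}" "\<forall>e\<in>Q. \<exists>a\<in>A. \<exists>b\<in>B. e = {a, b}"
  shows "\<forall>e\<in>lift_layer i Q. \<exists>x\<in>unravel_X A B k. \<exists>y\<in>unravel_Y A B k. e = {x, y}"
proof
  fix e assume "e \<in> lift_layer i Q"
  then obtain a b where ab: "a \<in> A" "b \<in> B" "e = {(a, i), (b, i)}"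
    using assms(3) unfolding lift_layer_def by fastforce
  show "\<exists>x\<in>unravel_X A B k. \<exists>y\<in>unravel_Y A B k. e = {x, y}"
  proof (cases "odd i")
    case True
    then have "(a, i) \<in> unravel_X A B k" "(b, i) \<in> unravel_Y A B k"
      using ab assms(1,2) unfolding unravel_X_def unravel_Y_def by auto
    then show ?thesis using ab(3) by blast
  next
    case False
    then have "(b, i) \<in> unravel_X A B k" "(a, i) \<in> unravel_Y A B k"
      using ab assms(1,2) unfolding unravel_X_def unravel_Y_def by auto
    then show ?thesis using ab(3) insert_commute by blast
  qed
qed

lemma unravel_E_bipartite:
  assumes "A \<inter> B = {}" and P_edges: "\<forall>i\<in>{1..k}. \<forall>e\<in>P i. \<exists>a\<in>A. \<exists>b\<in>B. e = {a, b}"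
  shows "\<forall>e\<in>unravel_E (A \<union> B) P k. \<exists>x\<in>unravel_X A B k. \<exists>y\<in>unravel_Y A B k. e = {x, y}"
proof
  fix e assume "e \<in> unravel_E (A \<union> B) P k"
  then consider (layer) i where "i \<in> {1..k}" "e \<in> lift_layer i (P i)"
    | (up) p where "p \<in> unravel_X A B k" "snd p < k" "e = {p, apsnd Suc p}"
    | (down) p where "p \<in> unravel_Y A B k" "snd p < k" "e = {p, apsnd Suc p}"
    unfolding unravel_E_eq[OF P_edges] rungs_def by blast
  then show "\<exists>x\<in>unravel_X A B k. \<exists>y\<in>unravel_Y A B k. e = {x, y}"
  proof cases
    case layer
    have "\<forall>e\<in>P i. \<exists>a\<in>A. \<exists>b\<in>B. e = {a, b}" using P_edges layer(1) ..
    from lift_layer_edges[OF assms(1) layer(1) this] layer(2) show ?thesis ..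
  next
    case up
    obtain v i where "p = (v, i)" by fastforce
    with up have "(v, Suc i) \<in> unravel_Y A B k" "e = {(v, i), (v, Suc i)}"
      using Suc_layer_unravel_X by auto
    with up \<open>p = (v, i)\<close> show ?thesis by blast
  next
    case down
    obtain v i where "p = (v, i)" by fastforce
    with down have "e = {(v, Suc i), (v, i)}" "(v, Suc i) \<in> unravel_X A B k"
      using Suc_layer_unravel_Y by (auto simp: insert_commute)
    with down \<open>p = (v, i)\<close> show ?thesis by blast
  qed
qed

lemma monotone_matching_rungs:
  assumes "C \<inter> D = {}" "S \<subseteq> C" "apsnd Suc ` S \<subseteq> D"
  shows "monotone_matching C D (unravel_rank A oA oB M) (unravel_rank A oA oB M) (rungs S)"
  unfolding rungs_def
proof (rule monotone_matching_graph[OF assms])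
  show "inj_on (apsnd Suc) S" by (auto simp: inj_on_def prod_eq_iff)
  have "unravel_rank A oA oB M (apsnd Suc p) = unravel_rank A oA oB M p + M" for p :: "'a \<times> nat"
    unfolding unravel_rank_def by (simp add: case_prod_beta)
  then show "unravel_rank A oA oB M (apsnd Suc p) < unravel_rank A oA oB M (apsnd Suc q)"
    if "unravel_rank A oA oB M p < unravel_rank A oA oB M q" for p q
    using that by simp
qed

lemma monotone_matching_rungs_X:
  "monotone_matching (unravel_X A B k) (unravel_Y A B k)
     (unravel_rank A oA oB M) (unravel_rank A oA oB M) (rungs {p \<in> unravel_X A B k. snd p < k})"
  by (rule monotone_matching_rungs[OF unravel_X_Y_disjoint]) (auto intro: Suc_layer_unravel_X)

lemma monotone_matching_rungs_Y:
  "monotone_matching (unravel_X A B k) (unravel_Y A B k)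
     (unravel_rank A oA oB M) (unravel_rank A oA oB M) (rungs {p \<in> unravel_Y A B k. snd p < k})"
proof (rule monotone_matching_swap[THEN iffD2], rule monotone_matching_rungs)
  show "unravel_Y A B k \<inter> unravel_X A B k = {}"
    using unravel_X_Y_disjoint by blast
qed (auto intro: Suc_layer_unravel_Y)

context
  fixes A B :: "'v set" and oA oB :: "'v \<Rightarrow> nat" and M :: nat
  assumes AB_disjoint: "A \<inter> B = {}" and inj_A: "inj_on oA A" and inj_B: "inj_on oB B"
    and A_bounded: "\<forall>a\<in>A. oA a < M" and B_bounded: "\<forall>b\<in>B. oB b < M"
begin

lemma unravel_rank_less_layer:
  assumes "v \<in> A \<union> B" "i < j"
  shows "unravel_rank A oA oB M (v, i) < unravel_rank A oA oB M (w, j)"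
proof -
  have "(if v \<in> A then oA v else oB v) < M" using assms(1) A_bounded B_bounded by auto
  then have "unravel_rank A oA oB M (v, i) < Suc i * M"
    unfolding unravel_rank_def by simp
  also have "\<dots> \<le> j * M" using mult_le_mono1[OF Suc_leI[OF assms(2)]] .
  also have "\<dots> \<le> unravel_rank A oA oB M (w, j)"
    unfolding unravel_rank_def by simp
  finally show ?thesis .
qed

lemma inj_on_unravel_rank:
  assumes "S \<subseteq> unravel_V (A \<union> B) k"
    and same_side: "\<And>v w i. (v, i) \<in> S \<Longrightarrow> (w, i) \<in> S \<Longrightarrow> v \<in> A \<longleftrightarrow> w \<in> A"
  shows "inj_on (unravel_rank A oA oB M) S"
proof (rule inj_onI, clarify)
  fix v i w j
  assume vi: "(v, i) \<in> S" and wj: "(w, j) \<in> S"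
    and eq: "unravel_rank A oA oB M (v, i) = unravel_rank A oA oB M (w, j)"
  have v: "v \<in> A \<union> B" and w: "w \<in> A \<union> B" using vi wj assms(1) unfolding unravel_V_def by auto
  have "i = j"
  proof (rule ccontr)
    assume "i \<noteq> j"
    then consider "i < j" | "j < i" by linarith
    then show False
      using unravel_rank_less_layer[OF v, of i j w] unravel_rank_less_layer[OF w, of j i v] eq
      by cases simp_all
  qed
  then have "(if v \<in> A then oA v else oB v) = (if w \<in> A then oA w else oB w)"
    using eq unfolding unravel_rank_def by simp
  moreover have "v \<in> A \<longleftrightarrow> w \<in> A" using same_side[of v i w] vi wj \<open>i = j\<close> by simp
  ultimately have "v = w"
    using v w inj_A inj_B by (cases "v \<in> A") (auto dest: inj_onD)
  then show "v = w \<and> i = j" using \<open>i = j\<close> by simp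
qed

lemma inj_on_unravel_rank_X: "inj_on (unravel_rank A oA oB M) (unravel_X A B k)"
  by (rule inj_on_unravel_rank) (auto simp: unravel_X_def unravel_V_def)

lemma inj_on_unravel_rank_Y: "inj_on (unravel_rank A oA oB M) (unravel_Y A B k)"
  by (rule inj_on_unravel_rank) (auto simp: unravel_Y_def unravel_V_def)

lemma monotone_matching_lift_layer:
  assumes "i \<in> {1..k}" and Q: "monotone_matching A B oA oB Q"
    and Q_edges: "\<forall>e\<in>Q. \<exists>a\<in>A. \<exists>b\<in>B. e = {a, b}"
  shows "monotone_matching (unravel_X A B k) (unravel_Y A B k)
           (unravel_rank A oA oB M) (unravel_rank A oA oB M) (lift_layer i Q)"
proof -
  let ?f = "\<lambda>v. (v, i)" and ?rank = "unravel_rank A oA oB M"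
  have inj: "inj_on ?f (A \<union> B)" "inj_on ?f (B \<union> A)" by (auto simp: inj_on_def)
  have reflA: "oA a < oA a'" if "a \<in> A" "a' \<in> A" "?rank (?f a) < ?rank (?f a')" for a a'
    using that unfolding unravel_rank_def by simp
  have reflB: "oB b < oB b'" if "b \<in> B" "b' \<in> B" "?rank (?f b) < ?rank (?f b')" for b b'
  proof -
    have "b \<notin> A" "b' \<notin> A" using that(1,2) AB_disjoint by auto
    then show ?thesis using that(3) unfolding unravel_rank_def by simp
  qed
  note image = monotone_matching_image[where f = ?f and oX = ?rank and oY = ?rank]
  show ?thesis
    unfolding lift_layer_def
  proof (cases "odd i")
    case True
    then have maps: "?f ` A \<subseteq> unravel_X A B k" "?f ` B \<subseteq> unravel_Y A B k"
      using assms(1) AB_disjoint unfolding unravel_X_def unravel_Y_def by auto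
    show "monotone_matching (unravel_X A B k) (unravel_Y A B k) ?rank ?rank ((`) ?f ` Q)"
      by (rule image[OF Q Q_edges inj(1) maps unravel_X_Y_disjoint]) (fact reflA reflB)+
  next
    case False
    then have maps: "?f ` B \<subseteq> unravel_X A B k" "?f ` A \<subseteq> unravel_Y A B k"
      using assms(1) AB_disjoint unfolding unravel_X_def unravel_Y_def by auto
    have "monotone_matching B A oB oA Q"
      using Q monotone_matching_swap by blast
    moreover have "\<forall>e\<in>Q. \<exists>b\<in>B. \<exists>a\<in>A. e = {b, a}"
    proof
      fix e assume "e \<in> Q"
      then obtain a b where "a \<in> A" "b \<in> B" "e = {b, a}"
        using Q_edges by (auto simp: insert_commute)
      then show "\<exists>b\<in>B. \<exists>a\<in>A. e = {b, a}" by blast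
    qed
    ultimately show "monotone_matching (unravel_X A B k) (unravel_Y A B k) ?rank ?rank ((`) ?f ` Q)"
      by (rule image[OF _ _ inj(2) maps unravel_X_Y_disjoint]) (fact reflA reflB)+
  qed
qed

lemma monotone_matching_layers:
  assumes "\<forall>i\<in>{1..k}. monotone_matching A B oA oB (P i)"
    and "\<forall>i\<in>{1..k}. \<forall>e\<in>P i. \<exists>a\<in>A. \<exists>b\<in>B. e = {a, b}"
  shows "monotone_matching (unravel_X A B k) (unravel_Y A B k)
           (unravel_rank A oA oB M) (unravel_rank A oA oB M) (\<Union>i\<in>{1..k}. lift_layer i (P i))"
proof (rule monotone_matching_UN_layers[where lvl = snd])
  show "monotone_matching (unravel_X A B k) (unravel_Y A B k)
          (unravel_rank A oA oB M) (unravel_rank A oA oB M) (lift_layer i (P i))"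
    if "i \<in> {1..k}" for i
    using monotone_matching_lift_layer that assms by blast
  show "snd p = i" if "e \<in> lift_layer i (P i)" "p \<in> e" for i e p
    using that unfolding lift_layer_def by auto
  show "unravel_rank A oA oB M p < unravel_rank A oA oB M q"
    if "p \<in> unravel_X A B k" "snd p < snd q" for p q
    using that unravel_rank_less_layer unfolding unravel_X_def by (cases p; cases q) auto
  show "unravel_rank A oA oB M p < unravel_rank A oA oB M q"
    if "p \<in> unravel_Y A B k" "snd p < snd q" for p q
    using that unravel_rank_less_layer unfolding unravel_Y_def by (cases p; cases q) auto
qed

end

theorem lemma8:
  fixes A B :: "'v set" and oA oB :: "'v \<Rightarrow> nat"
    and E :: "'v set set" and P :: "nat \<Rightarrow> 'v set set" and k :: nat
  assumes "finite A" and "finite B" and "A \<inter> B = {}"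
    and "inj_on oA A" and "inj_on oB B"
    and "\<forall>e\<in>E. \<exists>a\<in>A. \<exists>b\<in>B. e = {a, b}"
    and "E = (\<Union>i\<in>{1..k}. P i)"
    and "\<forall>i\<in>{1..k}. \<forall>j\<in>{1..k}. i \<noteq> j \<longrightarrow> P i \<inter> P j = {}"
    and "\<forall>i\<in>{1..k}. monotone_matching A B oA oB (P i)"
  shows "d_monotone (unravel_V (A \<union> B) k) (unravel_E (A \<union> B) P k) 3"
proof -
  obtain M where "\<forall>n \<in> oA ` A \<union> oB ` B. n < M"
    using finite_nat_set_iff_bounded assms(1,2) by blast
  then have bounded: "\<forall>a\<in>A. oA a < M" "\<forall>b\<in>B. oB b < M" by auto
  have P_edges: "\<forall>i\<in>{1..k}. \<forall>e\<in>P i. \<exists>a\<in>A. \<exists>b\<in>B. e = {a, b}"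
    using assms(6,7) by blast
  note setting = assms(3-5) bounded
  show ?thesis
    by (rule d_monotone_3I[OF unravel_X_Y_disjoint unravel_X_Un_Y
          inj_on_unravel_rank_X[OF setting] inj_on_unravel_rank_Y[OF setting]
          unravel_E_bipartite[OF assms(3) P_edges] unravel_E_eq[OF P_edges]
          monotone_matching_layers[OF setting assms(9) P_edges]
          monotone_matching_rungs_X monotone_matching_rungs_Y])
qed

end
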